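(* Let $A\in\mathbb{R}^{n\times d}$, $k\ge1$, $0<\epsilon\le1$ with $10/\epsilon$ an integer, and $t=10/\epsilon+1$. Let $\{0\}=P_0\subseteq P_1\subseteq\cdots\subseteq P_t$ be linear subspaces of $\mathbb{R}^d$ such that for every $i\in[t]$, $$\|A(I-\mathbb{P}_{P_i})\|_{1,2}\le(1+\epsilon)\,\mathrm{SubApx}_{k,1}(A(I-\mathbb{P}_{P_{i-1}})).$$ Then for at least $9/\epsilon$ indices $j\in\{1,\dots,10/\epsilon\}$ the following holds: for every linear subspace $W$ of dimension at most $k$, $$\|A(I-\mathbb{P}_{P_j})\|_{1,2}-\|A(I-\mathbb{P}_{P_j+W})\|_{1,2}\le4\epsilon\,\mathrm{SubApx}_{k,1}(A).$$
   Context: $\|M\|_{1,2}=\sum_i\|M_{i*}\|_2$. $\mathbb{P}_Q$ is the orthogonal projection matrix onto subspace $Q$; $P_j+W$ is the span of $P_j\cup W$. For $M$ with rows in $\mathbb{R}^d$, $\mathrm{SubApx}_{k,1}(M)=\min\{\sum_i\mathrm{dist}(M_{i*},Q):Q\text{ linear subspace},\dim Q\le k\}$. *)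

theory Defs
  imports "HOL-Analysis.Analysis"
begin

text \<open>Matrices M in R^(n x d) are represented as real^'d^'n; row i is M $ i.\<close>

definition proj :: "('a::euclidean_space) set \<Rightarrow> 'a \<Rightarrow> 'a" where
  "proj Q x = (THE p. p \<in> Q \<and> (\<forall>q\<in>Q. (x - p) \<bullet> q = 0))"

text \<open>The matrix M (I - P_Q): its i-th row is M_i - P_Q M_i (P_Q is symmetric).\<close>
definition resid :: "real^'d^'n \<Rightarrow> (real^'d) set \<Rightarrow> real^'d^'n" where
  "resid M Q = (\<chi> i. M $ i - proj Q (M $ i))"

definition norm12 :: "real^'d^'n \<Rightarrow> real" where
  "norm12 M = (\<Sum>i\<in>UNIV. norm (M $ i))"

definition SubApx :: "nat \<Rightarrow> real^'d^'n \<Rightarrow> real" where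
  "SubApx k M = Inf {(\<Sum>i\<in>UNIV. infdist (M $ i) Q) | Q. subspace Q \<and> dim Q \<le> k}"

end

theory Submission
  imports Defs
begin

text \<open>Write f j for the residual cost of P j and S for SubApx k A. Projecting away P j
  can only decrease the optimal rank-k cost, and for any W of dimension at most k the
  image of W under I - P_(P j) is a candidate subspace for the residual; hence
  SubApx k (resid A (P j)) \<le> min(S, cost of span (P j \<union> W)). So at an index j where
  some W decreases the cost by more than 4 \<epsilon> S, the hypothesis on P (j+1) forces
  f (j+1) < f j - 3 \<epsilon> S. The costs decrease and f 1 \<le> (1 + \<epsilon>) S \<le> 2 S, so
  telescoping leaves room for fewer than 2/(3 \<epsilon>) such indices among the 10/\<epsilon>.\<close>

lemma proj_unique:
  fixes Q :: "'a::euclidean_space set"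
  assumes "subspace Q" "p \<in> Q" "\<forall>q\<in>Q. (x - p) \<bullet> q = 0"
  shows "proj Q x = p"
  unfolding proj_def
proof (rule the_equality)
  show "p \<in> Q \<and> (\<forall>q\<in>Q. (x - p) \<bullet> q = 0)" using assms by blast
next
  fix p' assume p': "p' \<in> Q \<and> (\<forall>q\<in>Q. (x - p') \<bullet> q = 0)"
  have "p' - p \<in> Q" using p' assms subspace_diff by blast
  then have "(x - p) \<bullet> (p' - p) = 0" "(x - p') \<bullet> (p' - p) = 0" using p' assms by auto
  then have "(p' - p) \<bullet> (p' - p) = 0" by (simp add: inner_diff_left)
  then show "p' = p" by simp
qed

lemma proj_in_orthogonal:
  fixes Q :: "'a::euclidean_space set"
  assumes "subspace Q"
  shows "proj Q x \<in> Q" and "\<forall>q\<in>Q. (x - proj Q x) \<bullet> q = 0"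
proof -
  obtain y z where y: "y \<in> span Q" and z: "\<And>w. w \<in> span Q \<Longrightarrow> orthogonal z w"
    and x: "x = y + z"
    using orthogonal_subspace_decomp_exists[of Q x] by blast
  have span: "span Q = Q" using assms by (simp add: span_eq_iff)
  have yQ: "y \<in> Q" using y span by simp
  have orth: "\<forall>q\<in>Q. (x - y) \<bullet> q = 0"
    using z span x by (simp add: orthogonal_def)
  have "proj Q x = y" by (rule proj_unique[OF assms yQ orth])
  then show "proj Q x \<in> Q" "\<forall>q\<in>Q. (x - proj Q x) \<bullet> q = 0" using yQ orth by simp_all
qed

lemma norm_diff_proj_le:
  fixes Q :: "'a::euclidean_space set"
  assumes "subspace Q" "q \<in> Q"
  shows "norm (x - proj Q x) \<le> norm (x - q)"
proof -
  let ?p = "proj Q x"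
  have "?p - q \<in> Q" using proj_in_orthogonal(1)[OF assms(1)] assms subspace_diff by blast
  then have orth: "orthogonal (x - ?p) (?p - q)"
    using proj_in_orthogonal(2)[OF assms(1)] unfolding orthogonal_def by blast
  have "(norm (x - q))\<^sup>2 = (norm (x - ?p))\<^sup>2 + (norm (?p - q))\<^sup>2"
    using norm_add_Pythagorean[OF orth] by simp
  then have "(norm (x - ?p))\<^sup>2 \<le> (norm (x - q))\<^sup>2" by simp
  then show ?thesis by (rule power2_le_imp_le) simp
qed

lemma linear_proj:
  fixes Q :: "'a::euclidean_space set"
  assumes "subspace Q"
  shows "linear (proj Q)"
proof (rule linearI)
  note proj = proj_in_orthogonal[OF assms]
  fix x y
  show "proj Q (x + y) = proj Q x + proj Q y"
    using proj[of x] proj[of y] assms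
    by (intro proj_unique[OF assms]) (auto simp: subspace_add inner_diff_left inner_add_left)
next
  note proj = proj_in_orthogonal[OF assms]
  fix c :: real and x
  show "proj Q (c *\<^sub>R x) = c *\<^sub>R proj Q x"
    using proj[of x] assms
    by (intro proj_unique[OF assms])
       (auto simp: subspace_scale simp flip: scaleR_right_diff_distrib)
qed

lemma infdist_eq_norm_diff_proj:
  fixes Q :: "'a::euclidean_space set"
  assumes "subspace Q"
  shows "infdist x Q = norm (x - proj Q x)"
proof (rule antisym)
  show "infdist x Q \<le> norm (x - proj Q x)"
    using infdist_le[of "proj Q x" Q x] proj_in_orthogonal[OF assms] by (simp add: dist_norm)
  obtain q where "q \<in> Q" "infdist x Q = dist x q"
    using infdist_attains_inf[OF closed_subspace[OF assms]] subspace_0[OF assms] by blast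
  then show "norm (x - proj Q x) \<le> infdist x Q"
    using norm_diff_proj_le[OF assms] by (simp add: dist_norm)
qed

lemma infdist_diff_proj_image_le:
  fixes P Q :: "'a::euclidean_space set"
  assumes "subspace P" "q \<in> Q" "p \<in> P"
  shows "infdist (x - proj P x) ((\<lambda>y. y - proj P y) ` Q) \<le> norm (x - q - p)"
proof -
  have "infdist (x - proj P x) ((\<lambda>y. y - proj P y) ` Q) \<le> dist (x - proj P x) (q - proj P q)"
    using assms(2) by (intro infdist_le) auto
  also have "\<dots> = norm ((x - q) - proj P (x - q))"
    by (simp add: linear_diff[OF linear_proj[OF assms(1)]] dist_norm algebra_simps)
  also have "\<dots> \<le> norm (x - q - p)" by (rule norm_diff_proj_le[OF assms(1,3)])
  finally show ?thesis .
qed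

lemma norm12_resid: "norm12 (resid M Q) = (\<Sum>i\<in>UNIV. norm (M $ i - proj Q (M $ i)))"
  by (simp add: norm12_def resid_def)

lemma norm12_nonneg: "0 \<le> norm12 M"
  unfolding norm12_def by (simp add: sum_nonneg)

lemma resid_singleton_zero: "resid A {0} = A"
proof -
  have zero: "proj {0} x = 0" for x :: "real^'d" by (rule proj_unique) auto
  show ?thesis unfolding resid_def zero by simp
qed

lemma norm12_resid_antimono:
  fixes A :: "real^'d^'n"
  assumes "subspace P" "subspace P'" "P \<subseteq> P'"
  shows "norm12 (resid A P') \<le> norm12 (resid A P)"
  unfolding norm12_resid
  using proj_in_orthogonal(1)[OF assms(1)] assms(3)
  by (intro sum_mono norm_diff_proj_le[OF assms(2)]) blast

lemma SubApx_le:
  fixes M :: "real^'d^'n"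
  assumes "subspace Q" "dim Q \<le> k"
  shows "SubApx k M \<le> (\<Sum>i\<in>UNIV. infdist (M $ i) Q)"
  unfolding SubApx_def
  using assms
  by (intro cInf_lower bdd_belowI[of _ 0]) (auto intro: sum_nonneg infdist_nonneg)

lemma SubApx_greatest:
  fixes M :: "real^'d^'n"
  assumes "\<And>Q. subspace Q \<Longrightarrow> dim Q \<le> k \<Longrightarrow> c \<le> (\<Sum>i\<in>UNIV. infdist (M $ i) Q)"
  shows "c \<le> SubApx k M"
  unfolding SubApx_def
  using assms subspace_0[of "{0::real^'d}"]
  by (intro cInf_greatest) (auto intro!: exI[of _ "{0}"])

lemma SubApx_nonneg: "0 \<le> SubApx k (M::real^'d^'n)"
  by (rule SubApx_greatest) (auto intro: sum_nonneg infdist_nonneg)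

lemma SubApx_resid_le_image:
  fixes A :: "real^'d^'n"
  assumes "subspace P" "subspace Q" "dim Q \<le> k"
  shows "SubApx k (resid A P)
    \<le> (\<Sum>i\<in>UNIV. infdist (A $ i - proj P (A $ i)) ((\<lambda>y. y - proj P y) ` Q))"
proof -
  have "linear (\<lambda>y. y - proj P y)"
    using linear_compose_sub[OF linear_id linear_proj[OF assms(1)]] by (simp add: id_def)
  then have "subspace ((\<lambda>y. y - proj P y) ` Q)" "dim ((\<lambda>y. y - proj P y) ` Q) \<le> k"
    using linear_subspace_image[OF _ assms(2)] dim_image_le assms(3) le_trans by blast+
  then show ?thesis using SubApx_le[of _ k "resid A P"] by (simp add: resid_def)
qed

lemma SubApx_resid_le:
  fixes A :: "real^'d^'n"
  assumes "subspace P"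
  shows "SubApx k (resid A P) \<le> SubApx k A"
proof (rule SubApx_greatest)
  fix Q :: "(real^'d) set" assume Q: "subspace Q" "dim Q \<le> k"
  have "infdist (A $ i - proj P (A $ i)) ((\<lambda>y. y - proj P y) ` Q) \<le> infdist (A $ i) Q" for i
    using infdist_diff_proj_image_le[OF assms proj_in_orthogonal(1)[OF Q(1)] subspace_0[OF assms]]
    by (simp add: infdist_eq_norm_diff_proj[OF Q(1)])
  then have "(\<Sum>i\<in>UNIV. infdist (A $ i - proj P (A $ i)) ((\<lambda>y. y - proj P y) ` Q))
      \<le> (\<Sum>i\<in>UNIV. infdist (A $ i) Q)"
    by (rule sum_mono)
  with SubApx_resid_le_image[OF assms Q, of A]
  show "SubApx k (resid A P) \<le> (\<Sum>i\<in>UNIV. infdist (A $ i) Q)" by linarith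
qed

lemma SubApx_resid_le_norm12_span:
  fixes A :: "real^'d^'n"
  assumes P: "subspace P" and W: "subspace W" "dim W \<le> k"
  shows "SubApx k (resid A P) \<le> norm12 (resid A (span (P \<union> W)))"
proof -
  let ?V = "span (P \<union> W)"
  have "infdist (A $ i - proj P (A $ i)) ((\<lambda>y. y - proj P y) ` W) \<le> norm (A $ i - proj ?V (A $ i))"
    for i
  proof -
    have sum_decomp: "\<exists>p\<in>span P. \<exists>w\<in>span W. v = p + w" if "v \<in> span (P \<union> W)" for v
      using that unfolding span_Un by blast
    have "span P = P" "span W = W" using P W(1) by (simp_all add: span_eq_iff)
    then obtain p w where "p \<in> P" "w \<in> W" "proj ?V (A $ i) = p + w"
      using sum_decomp[OF proj_in_orthogonal(1)[OF subspace_span]] by blast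
    then show ?thesis
      using infdist_diff_proj_image_le[OF P, of w W p "A $ i"] by (simp add: algebra_simps)
  qed
  then have "(\<Sum>i\<in>UNIV. infdist (A $ i - proj P (A $ i)) ((\<lambda>y. y - proj P y) ` W))
      \<le> norm12 (resid A ?V)"
    unfolding norm12_resid by (rule sum_mono)
  with SubApx_resid_le_image[OF P W, of A] show ?thesis by linarith
qed

lemma norm12_resid_drop_gt:
  fixes A :: "real^'d^'n"
  assumes "subspace P" "subspace W" "dim W \<le> k" "0 \<le> \<epsilon>"
    and next_step: "norm12 (resid A P') \<le> (1 + \<epsilon>) * SubApx k (resid A P)"
    and gain: "norm12 (resid A P) - norm12 (resid A (span (P \<union> W))) > 4 * \<epsilon> * SubApx k A"
  shows "norm12 (resid A P') + 3 * \<epsilon> * SubApx k A < norm12 (resid A P)"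
proof -
  let ?s = "SubApx k (resid A P)"
  have "?s < norm12 (resid A P) - 4 * \<epsilon> * SubApx k A"
    using SubApx_resid_le_norm12_span[OF assms(1-3), of A] gain by linarith
  moreover have "\<epsilon> * ?s \<le> \<epsilon> * SubApx k A"
    using SubApx_resid_le[OF assms(1)] assms(4) by (rule mult_left_mono)
  ultimately show ?thesis using next_step by (simp add: algebra_simps)
qed

lemma sum_drops_le_total_drop:
  fixes f :: "nat \<Rightarrow> real"
  assumes "\<forall>j\<in>{1..m}. f (Suc j) \<le> f j" "B \<subseteq> {1..m}"
  shows "(\<Sum>j\<in>B. f j - f (Suc j)) \<le> f 1 - f (Suc m)"
proof -
  have "(\<Sum>j\<in>B. f j - f (Suc j)) \<le> (\<Sum>j=1..m. f j - f (Suc j))"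
    using assms by (intro sum_mono2) auto
  also have "\<dots> = - (\<Sum>j=1..m. f (Suc j) - f j)" by (simp add: sum_negf[symmetric])
  also have "\<dots> = f 1 - f (Suc m)" by (simp add: sum_Suc_diff)
  finally show ?thesis .
qed

lemma card_large_drops_le:
  fixes f :: "nat \<Rightarrow> real"
  assumes "\<forall>j\<in>{1..m}. f (Suc j) \<le> f j" "B \<subseteq> {1..m}"
    and drops: "\<forall>j\<in>B. f (Suc j) + \<delta> < f j"
    and "0 \<le> \<delta>" "0 \<le> C" and total: "f 1 - f (Suc m) \<le> C * \<delta>"
  shows "real (card B) \<le> C"
proof (cases "B = {}")
  case False
  have "finite B" using assms(2) finite_subset by blast
  moreover have "\<delta> < f j - f (Suc j)" if "j \<in> B" for j using drops that by auto
  ultimately have "(\<Sum>j\<in>B. \<delta>) < (\<Sum>j\<in>B. f j - f (Suc j))"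
    using False by (intro sum_strict_mono)
  then have "card B * \<delta> < C * \<delta>"
    using sum_drops_le_total_drop[OF assms(1,2)] total by simp
  then show ?thesis using \<open>0 \<le> \<delta>\<close> by (auto simp: mult_less_cancel_right)
qed (use \<open>0 \<le> C\<close> in simp)

theorem mainTheorem11:
  fixes A :: "real^'d^'n" and k m :: nat and \<epsilon> :: real
    and P :: "nat \<Rightarrow> (real^'d) set"
  assumes "k \<ge> 1"
    and "0 < \<epsilon>" and "\<epsilon> \<le> 1"
    and "real m = 10 / \<epsilon>"
    and "P 0 = {0}"
    and "\<And>i. i \<le> m + 1 \<Longrightarrow> subspace (P i)"
    and "\<And>i. i < m + 1 \<Longrightarrow> P i \<subseteq> P (Suc i)"
    and "\<And>i. 1 \<le> i \<Longrightarrow> i \<le> m + 1 \<Longrightarrow>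
           norm12 (resid A (P i)) \<le> (1 + \<epsilon>) * SubApx k (resid A (P (i - 1)))"
  shows "real (card {j \<in> {1..m}. \<forall>W. subspace W \<and> dim W \<le> k \<longrightarrow>
            norm12 (resid A (P j)) - norm12 (resid A (span (P j \<union> W)))
              \<le> 4 * \<epsilon> * SubApx k A}) \<ge> 9 / \<epsilon>"
  (is "real (card ?G) \<ge> _")
proof -
  define f where "f j = norm12 (resid A (P j))" for j
  define S where "S = SubApx k A"
  define B where "B = {1..m} - ?G"
  have S_nonneg: "0 \<le> S" unfolding S_def by (rule SubApx_nonneg)
  have antitone: "\<forall>j\<in>{1..m}. f (Suc j) \<le> f j"
    unfolding f_def using assms(6,7) by (auto intro!: norm12_resid_antimono simp: subset_eq)
  have drops: "\<forall>j\<in>B. f (Suc j) + 3 * \<epsilon> * S < f j"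
  proof
    fix j assume "j \<in> B"
    then obtain W where j: "1 \<le> j" "j \<le> m" and W: "subspace W" "dim W \<le> k"
      and "norm12 (resid A (P j)) - norm12 (resid A (span (P j \<union> W))) > 4 * \<epsilon> * S"
      unfolding B_def S_def by auto
    then show "f (Suc j) + 3 * \<epsilon> * S < f j"
      unfolding f_def S_def using assms(2,6) assms(8)[of "Suc j"]
      by (intro norm12_resid_drop_gt[OF _ W]) auto
  qed
  have "f 1 \<le> (1 + \<epsilon>) * S"
    using assms(5) assms(8)[of 1] unfolding f_def S_def by (simp add: resid_singleton_zero)
  also have "\<dots> \<le> 2 * S" using assms(3) S_nonneg by (intro mult_right_mono) auto
  also have "\<dots> = 2 / (3 * \<epsilon>) * (3 * \<epsilon> * S)" using assms(2) by simp
  finally have "f 1 - f (Suc m) \<le> 2 / (3 * \<epsilon>) * (3 * \<epsilon> * S)"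
    using norm12_nonneg[of "resid A (P (Suc m))"] unfolding f_def by linarith
  then have "real (card B) \<le> 2 / (3 * \<epsilon>)"
    using assms(2) S_nonneg B_def by (intro card_large_drops_le[OF antitone _ drops]) auto
  then have "real (card B) \<le> 1 / \<epsilon>"
    using assms(2) by (simp add: field_simps)
  moreover have "card ?G + card B = m"
  proof -
    have "card ?G \<le> card {1..m}" by (intro card_mono) auto
    then show ?thesis unfolding B_def by (subst card_Diff_subset) auto
  qed
  then have "real (card ?G) + real (card B) = 10 / \<epsilon>" using assms(4) by (simp flip: of_nat_add)
  moreover have "10 / \<epsilon> - 1 / \<epsilon> = 9 / \<epsilon>" by (simp add: diff_divide_distrib[symmetric])
  ultimately show ?thesis by linarith
qed

end
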